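(* Let $m,N\ge1$ and $\xi=(\xi_1,\dots,\xi_m)\in\mathbb{C}^m$ with $1,\xi_1,\dots,\xi_m$ linearly independent over $\overline{\mathbb{Q}}$. Let $A\in\mathrm{GL}_m(\overline{\mathbb{Q}})$ and $\xi'=A\xi$ (viewing tuples as column vectors). Let $\varrho\ge0$. If property $\mathcal P(m,N,\xi,R)$ holds for every subspace $R\subset\mathbb{C}^\Omega$ defined over $\overline{\mathbb{Q}}$ with $\dim R=\varrho$, then $\mathcal P(m,N,\xi',R')$ holds for every subspace $R'\subset\mathbb{C}^\Omega$ defined over $\overline{\mathbb{Q}}$ with $\dim R'=\varrho$.
   Context: Let $\Omega=\{\kappa\in\mathbb{N}^m:\ N-1\le|\kappa|\le N\}$, $\Theta=\{\kappa\in\mathbb{N}^m:\ |\kappa|=N\}$ (with $|\kappa|=\kappa_1+\dots+\kappa_m$), $(E_\kappa)_{\kappa\in\Omega}$ the canonical basis of $\mathbb{C}^\Omega$, $(e_j)$ that of $\mathbb{Z}^m$. For $\zeta=(\zeta_1,\dots,\zeta_m)\in\mathbb{C}^m$ and $\kappa\in\Theta$ put $Z_\kappa^{\zeta}=E_\kappa+\sum_{j=1}^m\zeta_jE_{\kappa-e_j}$ (with $E_{\kappa-e_j}=0$ if $\kappa_j=0$) and $F_\zeta=\mathrm{Span}\{Z^\zeta_\kappa:\kappa\in\Theta\}$. For a subspace $R\subset\mathbb{C}^\Omega$, $\mathcal P(m,N,\zeta,R)$ denotes the statement: $\dim R\ge\big(2-\frac{m-1}{N+m-1}\big)\dim(F_\zeta\cap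 R)$, with equality if and only if $R=\{0\}$ or $R=\mathbb{C}^\Omega$. A subspace is defined over $\overline{\mathbb{Q}}$ if it has a basis of vectors in $\overline{\mathbb{Q}}^\Omega$. *)

theory Defs
  imports "HOL-Computational_Algebra.Polynomial" "HOL-Library.Function_Algebras"
begin

text \<open>Multi-indices kappa in N^m are lists of naturals of length m; kappa ! j is the
  (j+1)-th coordinate. Vectors of C^Omega are functions nat list => complex that vanish
  outside Omega.\<close>

definition Omega :: "nat \<Rightarrow> nat \<Rightarrow> nat list set" where
  "Omega m N = {k. length k = m \<and> N - 1 \<le> sum_list k \<and> sum_list k \<le> N}"

definition Theta :: "nat \<Rightarrow> nat \<Rightarrow> nat list set" where
  "Theta m N = {k. length k = m \<and> sum_list k = N}"

definition cscale :: "complex \<Rightarrow> (nat list \<Rightarrow> complex) \<Rightarrow> (nat list \<Rightarrow> complex)" where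
  "cscale c f = (\<lambda>x. c * f x)"

definition CO :: "nat \<Rightarrow> nat \<Rightarrow> (nat list \<Rightarrow> complex) set" where
  "CO m N = {f. \<forall>x. x \<notin> Omega m N \<longrightarrow> f x = 0}"

definition Evec :: "nat list \<Rightarrow> (nat list \<Rightarrow> complex)" where
  "Evec k = (\<lambda>x. if x = k then 1 else 0)"

definition Zvec :: "nat \<Rightarrow> (nat \<Rightarrow> complex) \<Rightarrow> nat list \<Rightarrow> (nat list \<Rightarrow> complex)" where
  "Zvec m \<zeta> k = (\<lambda>x. Evec k x +
      (\<Sum>j<m. if 0 < k ! j then \<zeta> j * Evec (k[j := k ! j - 1]) x else 0))"

definition Fsp :: "nat \<Rightarrow> nat \<Rightarrow> (nat \<Rightarrow> complex) \<Rightarrow> (nat list \<Rightarrow> complex) set" where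
  "Fsp m N \<zeta> = module.span cscale (Zvec m \<zeta> ` Theta m N)"

definition cdim :: "(nat list \<Rightarrow> complex) set \<Rightarrow> nat" where
  "cdim R = vector_space.dim cscale R"

definition is_subspace :: "nat \<Rightarrow> nat \<Rightarrow> (nat list \<Rightarrow> complex) set \<Rightarrow> bool" where
  "is_subspace m N R \<longleftrightarrow> R \<subseteq> CO m N \<and> module.subspace cscale R"

definition defined_over_Qbar :: "(nat list \<Rightarrow> complex) set \<Rightarrow> bool" where
  "defined_over_Qbar R \<longleftrightarrow> (\<exists>B. B \<subseteq> R \<and> \<not> module.dependent cscale B \<and>
      module.span cscale B = R \<and> (\<forall>b\<in>B. \<forall>x. algebraic (b x)))"

definition propP :: "nat \<Rightarrow> nat \<Rightarrow> (nat \<Rightarrow> complex) \<Rightarrow> (nat list \<Rightarrow> complex) set \<Rightarrow> bool" where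
  "propP m N \<zeta> R \<longleftrightarrow>
     real (cdim R) \<ge> (2 - (real m - 1) / (real N + real m - 1)) * real (cdim (Fsp m N \<zeta> \<inter> R)) \<and>
     (real (cdim R) = (2 - (real m - 1) / (real N + real m - 1)) * real (cdim (Fsp m N \<zeta> \<inter> R))
        \<longleftrightarrow> (R = {0} \<or> R = CO m N))"

end

(*
  The matrix A acts on the coordinates indexed by multi-indices of degree d through its
  d-th symmetric power.  On C^Omega (degrees N - 1 and N) this gives a linear automorphism
  sym_map A, with inverse sym_map A^-1, which maps vectors with algebraic coordinates to
  such vectors.  The space F_zeta consists of the v in C^Omega with
  v(u) = sum_j zeta_j v(u + e_j) for |u| = N - 1, and since the symmetric power of A
  intertwines the shifts u -> u + e_j with A itself, sym_map A carries F_(A xi) onto F_xi.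
  Hence R' -> sym_map A R' preserves being defined over Qbar, dim R', dim (F cap R') and
  the extreme cases R' = {0} and R' = C^Omega, so the property P transfers from xi to A xi.
*)
theory Submission
  imports Defs "HOL-Algebra.Finite_Extensions" "HOL-Algebra.Algebraic_Closure_Type"
begin

subsection \<open>Sums and products of algebraic numbers\<close>

abbreviation complex_ring :: "complex ring" where
  "complex_ring \<equiv> ring_of_type_algebra"

lemma complex_ring_simps [simp]:
  "carrier complex_ring = UNIV" "x \<oplus>\<^bsub>complex_ring\<^esub> y = x + y" "x \<otimes>\<^bsub>complex_ring\<^esub> y = x * y"
  "\<one>\<^bsub>complex_ring\<^esub> = 1" "\<zero>\<^bsub>complex_ring\<^esub> = 0"
  by (simp_all add: ring_of_type_algebra_def)

lemma complex_ring_a_inv [simp]: "\<ominus>\<^bsub>complex_ring\<^esub> x = - x"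
  by (rule abelian_group.minus_equality)
    (use ring.is_abelian_group[OF ring_from_type_algebra] in simp_all)

lemma complex_ring_m_inv [simp]: "x \<noteq> 0 \<Longrightarrow> inv\<^bsub>complex_ring\<^esub> x = inverse x"
  by (rule comm_monoid.comm_inv_char)
    (use cring.axioms(2)[OF cring_from_type_algebra] in simp_all)

lemma complex_ring_nat_pow [simp]: "x [^]\<^bsub>complex_ring\<^esub> (n::nat) = x ^ n"
  by (induction n) simp_all

text \<open>HOL-Algebra stores polynomials as coefficient lists, leading coefficient first.\<close>

lemma complex_ring_eval: "ring.eval complex_ring p x = poly (Poly (rev p)) x"
  by (induction p)
    (simp_all add: ring.eval.simps[OF ring_from_type_algebra] Poly_append poly_monom algebra_simps)

lemma subfield_Rats_complex_ring: "subfield \<rat> complex_ring"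
  by (intro field.subfieldI' ring.subringI ring_from_type_algebra field_from_type_algebra) auto

lemma algebraic_iff_algebraic_over_Rats:
  "algebraic x \<longleftrightarrow> (ring.algebraic complex_ring over \<rat>) x"
proof
  assume "algebraic x"
  then obtain p where p: "\<And>i. Polynomial.coeff p i \<in> \<rat>" "p \<noteq> 0" "poly p x = 0"
    by (auto simp: algebraic_altdef)
  show "(ring.algebraic complex_ring over \<rat>) x"
  proof (rule ring.algebraicI[OF ring_from_type_algebra])
    show "rev (coeffs p) \<in> carrier (\<rat>[X]\<^bsub>complex_ring\<^esub>)"
      using p(1,2)
      by (auto simp: univ_poly_def polynomial_def coeffs_def last_coeffs_eq_coeff_degree hd_rev)
    show "rev (coeffs p) \<noteq> []" using p(2) by simp
    show "ring.eval complex_ring (rev (coeffs p)) x = \<zero>\<^bsub>complex_ring\<^esub>"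
      using p(3) by (simp add: complex_ring_eval)
  qed
next
  assume "(ring.algebraic complex_ring over \<rat>) x"
  then obtain q where q: "q \<in> carrier (\<rat>[X]\<^bsub>complex_ring\<^esub>)" "q \<noteq> []"
      "ring.eval complex_ring q x = 0"
    using domain.algebraicE[OF field.axioms(1)[OF field_from_type_algebra]
        subfieldE(1)[OF subfield_Rats_complex_ring]]
    by (metis complex_ring_simps(1,5) UNIV_I)
  show "algebraic x"
  proof (rule algebraicI')
    show "Polynomial.coeff (Poly (rev q)) i \<in> \<rat>" for i
      using q(1) by (auto simp: univ_poly_def polynomial_def nth_default_def rev_nth)
    have "hd q \<in> set q - {0}"
      using q(1,2) by (simp add: univ_poly_def polynomial_def)
    then show "Poly (rev q) \<noteq> 0"
      by (auto simp: Poly_eq_0 dest!: arg_cong[where f = set])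
    show "poly (Poly (rev q)) x = 0"
      using q(3) by (simp add: complex_ring_eval)
  qed
qed

lemma algebraic_add: "algebraic x \<Longrightarrow> algebraic y \<Longrightarrow> algebraic (x + y :: complex)"
  and algebraic_mult: "algebraic x \<Longrightarrow> algebraic y \<Longrightarrow> algebraic (x * y :: complex)"
  using subringE(6,7)[OF subfieldE(1)[OF field.subfield_of_algebraics
        [OF field_from_type_algebra subfield_Rats_complex_ring]]]
  by (simp_all add: algebraic_iff_algebraic_over_Rats)

lemma algebraic_sum:
  "(\<And>i. i \<in> I \<Longrightarrow> algebraic (f i :: complex)) \<Longrightarrow> algebraic (sum f I)"
  by (induction I rule: infinite_finite_induct) (auto intro: algebraic_add)

subsection \<open>Symmetric powers of a matrix acting on multi-indices\<close>

definition incr :: "nat \<Rightarrow> nat list \<Rightarrow> nat list" where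
  "incr j k = k[j := k ! j + 1]"

lemma length_incr [simp]: "length (incr j k) = length k"
  by (simp add: incr_def)

lemma sum_list_incr: "j < length k \<Longrightarrow> sum_list (incr j k) = Suc (sum_list k)"
  by (simp add: incr_def sum_list_update)

lemma incr_commute: "incr a (incr b k) = incr b (incr a k)"
  by (cases "a = b") (auto simp: incr_def list_update_swap nth_list_update)

lemma incr_eq_iff:
  assumes "j < length k"
  shows "incr j u = k \<longleftrightarrow> length u = length k \<and> 0 < k ! j \<and> k[j := k ! j - 1] = u"
  using assms by (auto simp: incr_def)

text \<open>For a word \<open>w = [w\<^sub>1, \<dots>, w\<^sub>n]\<close> over \<open>{..<m}\<close>,
  \<open>sym_word m C v w = (\<Sum>a\<^sub>1 \<dots> a\<^sub>n<m. C a\<^sub>1 w\<^sub>1 \<cdots> C a\<^sub>n w\<^sub>n \<cdot> v (e\<^sub>a\<^sub>1 + \<dots> + e\<^sub>a\<^sub>n))\<close>: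
  the coefficients \<open>v\<close> of degree \<open>n\<close> transformed by the \<open>n\<close>-th symmetric power of \<open>C\<close>.\<close>

fun sym_word ::
  "nat \<Rightarrow> (nat \<Rightarrow> nat \<Rightarrow> complex) \<Rightarrow> (nat list \<Rightarrow> complex) \<Rightarrow> nat list \<Rightarrow> complex" where
  "sym_word m C v [] = v (replicate m 0)"
| "sym_word m C v (k # w) = (\<Sum>a<m. C a k * sym_word m C (\<lambda>x. v (incr a x)) w)"

lemma sym_word_cong:
  assumes "\<And>x. length x = m \<Longrightarrow> sum_list x = length w \<Longrightarrow> v x = v' x"
  shows "sym_word m C v w = sym_word m C v' w"
  using assms
proof (induction w arbitrary: v v')
  case (Cons k w)
  have "sym_word m C (\<lambda>x. v (incr a x)) w = sym_word m C (\<lambda>x. v' (incr a x)) w" if "a < m" for a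
    by (rule Cons.IH) (use Cons.prems that in \<open>auto simp: sum_list_incr\<close>)
  then show ?case by simp
qed simp

lemma sym_word_swap: "sym_word m C v (k # l # w) = sym_word m C v (l # k # w)"
proof -
  have "sym_word m C v (k # l # w)
      = (\<Sum>a<m. \<Sum>b<m. C a k * C b l * sym_word m C (\<lambda>x. v (incr a (incr b x))) w)"
    by (simp add: sum_distrib_left mult.assoc)
  also have "\<dots> = (\<Sum>b<m. \<Sum>a<m. C b l * C a k * sym_word m C (\<lambda>x. v (incr b (incr a x))) w)"
    by (subst sum.swap) (simp add: incr_commute mult.commute)
  also have "\<dots> = sym_word m C v (l # k # w)"
    by (simp add: sum_distrib_left mult.assoc)
  finally show ?thesis .
qed

lemma sym_word_move_to_front: "sym_word m C v (xs @ k # ys) = sym_word m C v (k # xs @ ys)"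
proof (induction xs arbitrary: v)
  case (Cons x xs)
  then have "sym_word m C v ((x # xs) @ k # ys) = sym_word m C v (x # k # xs @ ys)"
    by simp
  also have "\<dots> = sym_word m C v (k # x # xs @ ys)"
    by (rule sym_word_swap)
  finally show ?case by simp
qed simp

lemma sym_word_perm: "mset w = mset w' \<Longrightarrow> sym_word m C v w = sym_word m C v w'"
proof (induction w arbitrary: v w')
  case (Cons k w)
  then obtain xs ys where w': "w' = xs @ k # ys"
    by (metis list.set_intros(1) set_mset_mset split_list)
  with Cons.prems have "mset w = mset (xs @ ys)" by simp
  then have "sym_word m C v (k # w) = sym_word m C v (k # xs @ ys)"
    by (simp only: sym_word.simps Cons.IH)
  then show ?case by (simp add: w' sym_word_move_to_front)
qed simp

lemma sym_word_sum:
  "sym_word m C (\<lambda>x. \<Sum>b\<in>S. g b * f b x) w = (\<Sum>b\<in>S. g b * sym_word m C (f b) w)"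
proof (induction w arbitrary: f)
  case (Cons k w)
  show ?case
    by (simp add: Cons[of "\<lambda>b x. f b (incr _ x)"] sum_distrib_left mult.left_commute)
      (rule sum.swap)
qed simp

lemma sym_word_add: "sym_word m C (\<lambda>x. v x + u x) w = sym_word m C v w + sym_word m C u w"
  by (induction w arbitrary: v u) (simp_all add: distrib_left sum.distrib)

lemma sym_word_diff: "sym_word m C (\<lambda>x. v x - u x) w = sym_word m C v w - sym_word m C u w"
  by (induction w arbitrary: v u) (simp_all add: right_diff_distrib sum_subtractf)

lemma sym_word_scale: "sym_word m C (\<lambda>x. c * v x) w = c * sym_word m C v w"
  by (induction w arbitrary: v) (simp_all add: sum_distrib_left mult.left_commute)

lemma sym_word_zero: "sym_word m C (\<lambda>x. 0) w = 0"
  using sym_word_scale[of m C 0] by simp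

lemma algebraic_sym_word:
  assumes "\<And>a k. a < m \<Longrightarrow> k < m \<Longrightarrow> algebraic (C a k)"
    and "set w \<subseteq> {..<m}" "\<And>x. algebraic (v x)"
  shows "algebraic (sym_word m C v w)"
  using assms(2,3)
  by (induction w arbitrary: v) (auto intro!: algebraic_sum algebraic_mult assms(1))

fun word_from :: "nat \<Rightarrow> nat list \<Rightarrow> nat list" where
  "word_from i [] = []"
| "word_from i (c # k) = replicate c i @ word_from (Suc i) k"

definition word_of :: "nat list \<Rightarrow> nat list" where
  "word_of k = word_from 0 k"

lemma count_word_from:
  "count (mset (word_from i k)) j = (if i \<le> j \<and> j < i + length k then k ! (j - i) else 0)"
proof (induction k arbitrary: i)
  case (Cons c k)
  show ?case
  proof (cases "j \<le> i")
    case True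
    then show ?thesis using Cons[of "Suc i"] by auto
  next
    case False
    then have "j - i = Suc (j - Suc i)" by simp
    then show ?thesis using Cons[of "Suc i"] False by simp
  qed
qed simp

lemma count_word_of: "count (mset (word_of k)) j = (if j < length k then k ! j else 0)"
  by (simp add: word_of_def count_word_from)

lemma length_word_of: "length (word_of k) = sum_list k"
proof -
  have "length (word_from i k) = sum_list k" for i
    by (induction k arbitrary: i) auto
  then show ?thesis by (simp add: word_of_def)
qed

lemma set_word_of: "set (word_of k) \<subseteq> {..<length k}"
proof -
  have "set (word_from i k) \<subseteq> {i..<i + length k}" for i
    by (induction k arbitrary: i) fastforce+
  then show ?thesis by (fastforce simp: word_of_def)
qed

lemma word_of_replicate_0 [simp]: "word_of (replicate n 0) = []"
proof -
  have "word_from i (replicate n 0) = []" for i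
    by (induction n arbitrary: i) auto
  then show ?thesis by (simp add: word_of_def)
qed

lemma mset_word_of_incr: "a < length k \<Longrightarrow> mset (word_of (incr a k)) = mset (a # word_of k)"
  by (auto simp: multiset_eq_iff count_word_of incr_def nth_list_update)

definition counts :: "nat \<Rightarrow> nat list \<Rightarrow> nat list" where
  "counts m w = map (\<lambda>j. count (mset w) j) [0..<m]"

lemma counts_word_of: "length k = m \<Longrightarrow> counts m (word_of k) = k"
  by (auto simp: counts_def count_word_of intro: nth_equalityI)

lemma counts_Nil: "counts m [] = replicate m 0"
  by (auto simp: counts_def intro: nth_equalityI)

lemma counts_Cons: "k < m \<Longrightarrow> counts m (k # w) = incr k (counts m w)"
  by (auto simp: counts_def incr_def nth_list_update intro: nth_equalityI)

lemma sym_word_identity: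
  assumes "\<And>a k. a < m \<Longrightarrow> k < m \<Longrightarrow> I a k = (if a = k then 1 else 0)"
  shows "set w \<subseteq> {..<m} \<Longrightarrow> sym_word m I v w = v (counts m w)"
proof (induction w arbitrary: v)
  case Nil
  then show ?case by (simp add: counts_Nil)
next
  case (Cons k w)
  then have k: "k < m" and w: "set w \<subseteq> {..<m}" by auto
  have "sym_word m I v (k # w) = (\<Sum>a<m. if a = k then sym_word m I (\<lambda>x. v (incr a x)) w else 0)"
    unfolding sym_word.simps by (rule sum.cong) (use assms k in auto)
  also have "\<dots> = sym_word m I (\<lambda>x. v (incr k x)) w"
    using k by simp
  also have "\<dots> = v (counts m (k # w))"
    using Cons.IH[OF w] k by (simp add: counts_Cons)
  finally show ?case .
qed

definition sym_act ::
  "nat \<Rightarrow> (nat \<Rightarrow> nat \<Rightarrow> complex) \<Rightarrow> (nat list \<Rightarrow> complex) \<Rightarrow> nat list \<Rightarrow> complex" where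
  "sym_act m C v k = sym_word m C v (word_of k)"

lemma sym_act_incr:
  assumes "a < length k"
  shows "sym_act m C v (incr a k) = (\<Sum>b<m. C b a * sym_act m C (\<lambda>x. v (incr b x)) k)"
proof -
  have "sym_act m C v (incr a k) = sym_word m C v (a # word_of k)"
    unfolding sym_act_def by (rule sym_word_perm) (simp add: mset_word_of_incr[OF assms])
  then show ?thesis by (simp add: sym_act_def)
qed

lemma sym_word_sym_act:
  "set w \<subseteq> {..<m} \<Longrightarrow>
     sym_word m A (sym_act m C v) w = sym_word m (\<lambda>b k. \<Sum>a<m. C b a * A a k) v w"
proof (induction w arbitrary: v)
  case Nil
  then show ?case by (simp add: sym_act_def)
next
  case (Cons k w)
  let ?CA = "\<lambda>b k. \<Sum>a<m. C b a * A a k"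
  have w: "set w \<subseteq> {..<m}" using Cons.prems by simp
  have step: "sym_word m A (\<lambda>x. sym_act m C v (incr a x)) w
      = (\<Sum>b<m. C b a * sym_word m ?CA (\<lambda>x. v (incr b x)) w)" if "a < m" for a
  proof -
    have "sym_word m A (\<lambda>x. sym_act m C v (incr a x)) w
        = sym_word m A (\<lambda>x. \<Sum>b\<in>{..<m}. C b a * sym_act m C (\<lambda>x. v (incr b x)) x) w"
      by (rule sym_word_cong) (use that in \<open>simp add: sym_act_incr\<close>)
    also have "\<dots> = (\<Sum>b<m. C b a * sym_word m A (sym_act m C (\<lambda>x. v (incr b x))) w)"
      by (rule sym_word_sum)
    finally show ?thesis
      using Cons.IH[OF w] by simp
  qed
  have "sym_word m A (sym_act m C v) (k # w)
      = (\<Sum>a<m. A a k * (\<Sum>b<m. C b a * sym_word m ?CA (\<lambda>x. v (incr b x)) w))"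
    by (simp add: step)
  also have "\<dots> = (\<Sum>b<m. ?CA b k * sym_word m ?CA (\<lambda>x. v (incr b x)) w)"
    by (simp add: sum_distrib_left sum_distrib_right mult_ac) (rule sum.swap)
  finally show ?case by simp
qed

lemma sym_act_inverse:
  assumes "\<And>i j. i < m \<Longrightarrow> j < m \<Longrightarrow> (\<Sum>k<m. A i k * B k j) = (if i = j then 1 else 0)"
    and "length k = m"
  shows "sym_word m B (sym_act m A v) (word_of k) = v k"
proof -
  have w: "set (word_of k) \<subseteq> {..<m}"
    using set_word_of[of k] assms(2) by simp
  have "sym_word m B (sym_act m A v) (word_of k)
      = sym_word m (\<lambda>b c. \<Sum>a<m. A b a * B a c) v (word_of k)"
    by (rule sym_word_sym_act[OF w])
  also have "\<dots> = v (counts m (word_of k))"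
    by (rule sym_word_identity[OF _ w]) (simp add: assms(1))
  finally show ?thesis
    by (simp add: counts_word_of assms(2))
qed

interpretation V: vector_space cscale
  by unfold_locales (auto simp: cscale_def algebra_simps fun_eq_iff)

lemma subspace_CO: "V.subspace (CO m N)"
  by (auto simp: V.subspace_def CO_def cscale_def)

definition sym_map ::
  "nat \<Rightarrow> nat \<Rightarrow> (nat \<Rightarrow> nat \<Rightarrow> complex) \<Rightarrow> (nat list \<Rightarrow> complex) \<Rightarrow> nat list \<Rightarrow> complex" where
  "sym_map m N C v = (\<lambda>k. if k \<in> Omega m N then sym_act m C v k else 0)"

lemma sym_map_in_CO: "sym_map m N C v \<in> CO m N"
  by (simp add: sym_map_def CO_def)

lemma module_hom_sym_map: "module_hom cscale cscale (sym_map m N C)"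
proof -
  have "sym_map m N C (x + y) = sym_map m N C x + sym_map m N C y" for x y
    using sym_word_add[of m C x y] by (auto simp: sym_map_def sym_act_def plus_fun_def)
  moreover have "sym_map m N C (cscale c x) = cscale c (sym_map m N C x)" for c x
    by (auto simp: sym_map_def sym_act_def cscale_def sym_word_scale)
  ultimately show ?thesis
    using V.module_axioms by (simp add: module_hom_iff)
qed

lemma word_of_Omega:
  "k \<in> Omega m N \<Longrightarrow> set (word_of k) \<subseteq> {..<m} \<and> length (word_of k) = sum_list k"
  using set_word_of[of k] by (auto simp: Omega_def length_word_of)

lemma sym_map_inverse:
  assumes "\<And>i j. i < m \<Longrightarrow> j < m \<Longrightarrow> (\<Sum>k<m. A i k * B k j) = (if i = j then 1 else 0)"
    and v: "v \<in> CO m N"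
  shows "sym_map m N B (sym_map m N A v) = v"
proof
  fix k
  show "sym_map m N B (sym_map m N A v) k = v k"
  proof (cases "k \<in> Omega m N")
    case True
    have "sym_word m B (sym_map m N A v) (word_of k) = sym_word m B (sym_act m A v) (word_of k)"
      by (rule sym_word_cong) (use True in \<open>auto simp: sym_map_def Omega_def length_word_of\<close>)
    also have "\<dots> = v k"
      by (rule sym_act_inverse) (use assms(1) True in \<open>auto simp: Omega_def\<close>)
    finally show ?thesis
      using True by (simp add: sym_map_def sym_act_def)
  qed (use v in \<open>simp add: sym_map_def CO_def\<close>)
qed

lemma bij_betw_sym_map:
  assumes "\<And>i j. i < m \<Longrightarrow> j < m \<Longrightarrow> (\<Sum>k<m. A i k * B k j) = (if i = j then 1 else 0)"
    and "\<And>i j. i < m \<Longrightarrow> j < m \<Longrightarrow> (\<Sum>k<m. B i k * A k j) = (if i = j then 1 else 0)"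
  shows "bij_betw (sym_map m N A) (CO m N) (CO m N)"
  by (rule bij_betw_byWitness[where f' = "sym_map m N B"])
    (auto simp: sym_map_inverse assms sym_map_in_CO)

lemma algebraic_sym_map:
  assumes "\<And>a k. a < m \<Longrightarrow> k < m \<Longrightarrow> algebraic (C a k)" "\<And>x. algebraic (v x)"
  shows "algebraic (sym_map m N C v x)"
  using assms word_of_Omega[of x m N]
  by (auto simp: sym_map_def sym_act_def intro!: algebraic_sym_word)

subsection \<open>The space \<open>F\<^sub>\<zeta>\<close> as a graph\<close>

definition Fgraph :: "nat \<Rightarrow> nat \<Rightarrow> (nat \<Rightarrow> complex) \<Rightarrow> (nat list \<Rightarrow> complex) set" where
  "Fgraph m N \<zeta> = {v \<in> CO m N. \<forall>u. length u = m \<and> sum_list u = N - 1 \<longrightarrow>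
       v u = (\<Sum>j<m. \<zeta> j * v (incr j u))}"

lemma subspace_Fgraph: "V.subspace (Fgraph m N \<zeta>)"
  unfolding V.subspace_def Fgraph_def CO_def
  by (auto simp: cscale_def sum.distrib sum_distrib_left algebra_simps)

lemma finite_Theta: "finite (Theta m N)"
proof (rule finite_subset)
  show "Theta m N \<subseteq> {xs. set xs \<subseteq> {..N} \<and> length xs = m}"
    by (auto simp: Theta_def dest: member_le_sum_list)
qed (simp add: finite_lists_length_eq)

lemma Zvec_apply:
  assumes "length k = m"
  shows "Zvec m \<zeta> k x
    = (if x = k then 1 else 0) + (\<Sum>j<m. if length x = m \<and> incr j x = k then \<zeta> j else 0)"
  unfolding Zvec_def Evec_def
  by (intro arg_cong2[where f = "(+)"] sum.cong) (auto simp: incr_eq_iff assms)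

lemma Zvec_in_Fgraph:
  assumes N: "N \<ge> 1" and k: "k \<in> Theta m N"
  shows "Zvec m \<zeta> k \<in> Fgraph m N \<zeta>"
proof -
  have lk: "length k = m" and sk: "sum_list k = N"
    using k by (auto simp: Theta_def)
  have incr_k: "sum_list x = N - 1" if "incr j x = k" "length x = m" "j < m" for x j
    using sum_list_incr[of j x] that sk by auto
  have "Zvec m \<zeta> k x = 0" if x: "x \<notin> Omega m N" for x
  proof -
    have "x \<noteq> k" using x k by (auto simp: Omega_def Theta_def)
    moreover have "(\<Sum>j<m. if length x = m \<and> incr j x = k then \<zeta> j else 0) = 0"
      using incr_k x by (intro sum.neutral) (auto simp: Omega_def)
    ultimately show ?thesis by (simp add: Zvec_apply lk)
  qed
  moreover have "Zvec m \<zeta> k u = (\<Sum>j<m. \<zeta> j * Zvec m \<zeta> k (incr j u))"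
    if u: "length u = m" "sum_list u = N - 1" for u
  proof -
    have "Zvec m \<zeta> k (incr j u) = (if incr j u = k then 1 else 0)" if j: "j < m" for j
    proof -
      have "incr i (incr j u) \<noteq> k" if "i < m" for i
        using sum_list_incr[of i "incr j u"] sum_list_incr[of j u] that j u sk by auto
      then have "(\<Sum>i<m. if length (incr j u) = m \<and> incr i (incr j u) = k then \<zeta> i else 0) = 0"
        by (intro sum.neutral) simp
      then show ?thesis by (simp add: Zvec_apply lk)
    qed
    moreover have "u \<noteq> k" using u sk N by auto
    ultimately show ?thesis
      by (simp add: Zvec_apply lk u if_distrib[of "(*) _"] cong: if_cong)
  qed
  ultimately show ?thesis
    by (auto simp: Fgraph_def CO_def)
qed

lemma Zvec_combination_apply:
  assumes N: "N \<ge> 1"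
  shows "(\<Sum>k\<in>Theta m N. cscale (c k) (Zvec m \<zeta> k)) x
    = (if x \<in> Theta m N then c x else 0)
      + (if length x = m \<and> sum_list x = N - 1 then \<Sum>j<m. \<zeta> j * c (incr j x) else 0)"
proof -
  have incr_Theta: "incr j x \<in> Theta m N \<longleftrightarrow> sum_list x = N - 1"
    if "length x = m" "j < m" for j
    using sum_list_incr[of j x] that N by (auto simp: Theta_def)
  have diagonal: "(\<Sum>k\<in>Theta m N. if x = k then c k else 0) = (if x \<in> Theta m N then c x else 0)"
    by (simp add: finite_Theta)
  have off_diagonal: "(\<Sum>k\<in>Theta m N. if length x = m \<and> incr j x = k then c k else 0)
      = (if length x = m \<and> sum_list x = N - 1 then c (incr j x) else 0)" if "j < m" for j
    using that by (cases "length x = m") (auto simp: finite_Theta incr_Theta)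
  have sum_apply: "(\<Sum>k\<in>S. cscale (c k) (Zvec m \<zeta> k)) x = (\<Sum>k\<in>S. c k * Zvec m \<zeta> k x)" for S
    by (induction S rule: infinite_finite_induct) (auto simp: cscale_def)
  have "(\<Sum>k\<in>Theta m N. cscale (c k) (Zvec m \<zeta> k)) x
      = (\<Sum>k\<in>Theta m N. if x = k then c k else 0)
      + (\<Sum>k\<in>Theta m N. \<Sum>j<m. \<zeta> j * (if length x = m \<and> incr j x = k then c k else 0))"
    unfolding sum_apply sum.distrib[symmetric]
    by (rule sum.cong) (auto simp: Zvec_apply Theta_def distrib_left sum_distrib_left intro: sum.cong)
  also have "(\<Sum>k\<in>Theta m N. \<Sum>j<m. \<zeta> j * (if length x = m \<and> incr j x = k then c k else 0))
      = (\<Sum>j<m. \<zeta> j * (\<Sum>k\<in>Theta m N. if length x = m \<and> incr j x = k then c k else 0))"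
    by (subst sum.swap) (simp add: sum_distrib_left)
  also have "\<dots> = (\<Sum>j<m. \<zeta> j * (if length x = m \<and> sum_list x = N - 1 then c (incr j x) else 0))"
    by (rule sum.cong) (simp_all add: off_diagonal)
  moreover have "(\<Sum>j<m. \<zeta> j * (if P then c (incr j x) else 0))
      = (if P then \<Sum>j<m. \<zeta> j * c (incr j x) else 0)" for P
    by (cases P) simp_all
  ultimately show ?thesis
    by (simp add: diagonal)
qed

lemma Fsp_eq_Fgraph:
  assumes N: "N \<ge> 1"
  shows "Fsp m N \<zeta> = Fgraph m N \<zeta>"
proof
  show "Fsp m N \<zeta> \<subseteq> Fgraph m N \<zeta>"
    unfolding Fsp_def using Zvec_in_Fgraph[OF N]
    by (intro V.span_minimal subspace_Fgraph) auto
next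
  show "Fgraph m N \<zeta> \<subseteq> Fsp m N \<zeta>"
  proof
    fix v assume v: "v \<in> Fgraph m N \<zeta>"
    have "v x = (\<Sum>k\<in>Theta m N. cscale (v k) (Zvec m \<zeta> k)) x" for x
    proof -
      have "sum_list x = N \<or> sum_list x = N - 1" if "N - 1 \<le> sum_list x" "sum_list x \<le> N"
        using that by linarith
      then consider "x \<in> Theta m N" | "length x = m" "sum_list x = N - 1" | "x \<notin> Omega m N"
        by (auto simp: Omega_def Theta_def)
      then show ?thesis
        unfolding Zvec_combination_apply[OF N]
        by cases (use v N in \<open>auto simp: Fgraph_def CO_def Omega_def Theta_def\<close>)
    qed
    then have "v = (\<Sum>k\<in>Theta m N. cscale (v k) (Zvec m \<zeta> k))" ..
    moreover have "(\<Sum>k\<in>Theta m N. cscale (v k) (Zvec m \<zeta> k)) \<in> Fsp m N \<zeta>"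
      unfolding Fsp_def by (intro V.span_sum V.span_scale V.span_base imageI)
    ultimately show "v \<in> Fsp m N \<zeta>" by simp
  qed
qed

lemma sym_act_vanishes_iff:
  assumes "\<And>i j. i < m \<Longrightarrow> j < m \<Longrightarrow> (\<Sum>k<m. A i k * B k j) = (if i = j then 1 else 0)"
  shows "(\<forall>u. length u = m \<and> sum_list u = n \<longrightarrow> sym_act m A d u = 0)
     \<longleftrightarrow> (\<forall>u. length u = m \<and> sum_list u = n \<longrightarrow> d u = 0)"
proof (intro iffI allI impI)
  fix u assume vanish: "\<forall>u. length u = m \<and> sum_list u = n \<longrightarrow> sym_act m A d u = 0"
    and u: "length u = m \<and> sum_list u = n"
  have "d u = sym_word m B (sym_act m A d) (word_of u)"
    by (rule sym_act_inverse[symmetric]) (use assms u in auto)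
  also have "\<dots> = sym_word m B (\<lambda>x. 0) (word_of u)"
    by (rule sym_word_cong) (use vanish u in \<open>simp add: length_word_of\<close>)
  finally show "d u = 0" by (simp add: sym_word_zero)
next
  fix u assume vanish: "\<forall>u. length u = m \<and> sum_list u = n \<longrightarrow> d u = 0"
    and u: "length u = m \<and> sum_list u = n"
  have "sym_act m A d u = sym_word m A (\<lambda>x. 0) (word_of u)"
    unfolding sym_act_def by (rule sym_word_cong) (use vanish u in \<open>simp add: length_word_of\<close>)
  then show "sym_act m A d u = 0" by (simp add: sym_word_zero)
qed

lemma sym_map_defect:
  assumes N: "N \<ge> 1" and \<xi>': "\<And>i. i < m \<Longrightarrow> \<xi>' i = (\<Sum>j<m. A i j * \<xi> j)"
    and u: "length u = m" "sum_list u = N - 1"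
  shows "sym_map m N A v u - (\<Sum>j<m. \<xi> j * sym_map m N A v (incr j u))
    = sym_act m A (\<lambda>x. v x - (\<Sum>b<m. \<xi>' b * v (incr b x))) u"
proof -
  have incr_Omega: "incr j u \<in> Omega m N" if "j < m" for j
    using that u N sum_list_incr[of j u] by (simp add: Omega_def)
  have "(\<Sum>j<m. \<xi> j * sym_map m N A v (incr j u))
      = (\<Sum>j<m. \<xi> j * (\<Sum>b<m. A b j * sym_act m A (\<lambda>x. v (incr b x)) u))"
    using incr_Omega u by (intro sum.cong refl) (simp add: sym_map_def sym_act_incr)
  also have "\<dots> = (\<Sum>b<m. (\<Sum>j<m. A b j * \<xi> j) * sym_act m A (\<lambda>x. v (incr b x)) u)"
    by (simp add: sum_distrib_left sum_distrib_right mult_ac) (rule sum.swap)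
  also have "\<dots> = (\<Sum>b<m. \<xi>' b * sym_act m A (\<lambda>x. v (incr b x)) u)"
    using \<xi>' by simp
  also have "\<dots> = sym_act m A (\<lambda>x. \<Sum>b\<in>{..<m}. \<xi>' b * v (incr b x)) u"
    unfolding sym_act_def by (rule sym_word_sum[symmetric])
  finally show ?thesis
    using u by (simp add: sym_map_def Omega_def sym_act_def sym_word_diff)
qed

lemma sym_map_in_Fgraph_iff:
  assumes N: "N \<ge> 1" and \<xi>': "\<And>i. i < m \<Longrightarrow> \<xi>' i = (\<Sum>j<m. A i j * \<xi> j)"
    and AB: "\<And>i j. i < m \<Longrightarrow> j < m \<Longrightarrow> (\<Sum>k<m. A i k * B k j) = (if i = j then 1 else 0)"
    and v: "v \<in> CO m N"
  shows "sym_map m N A v \<in> Fgraph m N \<xi> \<longleftrightarrow> v \<in> Fgraph m N \<xi>'"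
proof -
  let ?d = "\<lambda>x. v x - (\<Sum>b<m. \<xi>' b * v (incr b x))"
  have defect: "sym_map m N A v u - (\<Sum>j<m. \<xi> j * sym_map m N A v (incr j u)) = sym_act m A ?d u"
    if "length u = m" "sum_list u = N - 1" for u
    by (rule sym_map_defect[OF N \<xi>' that])
  have "sym_map m N A v \<in> Fgraph m N \<xi>
      \<longleftrightarrow> (\<forall>u. length u = m \<and> sum_list u = N - 1 \<longrightarrow> sym_act m A ?d u = 0)"
    using defect sym_map_in_CO[of m N A v] by (auto simp: Fgraph_def)
  also have "\<dots> \<longleftrightarrow> (\<forall>u. length u = m \<and> sum_list u = N - 1 \<longrightarrow> ?d u = 0)"
    by (rule sym_act_vanishes_iff[OF AB])
  also have "\<dots> \<longleftrightarrow> v \<in> Fgraph m N \<xi>'"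
    using v by (auto simp: Fgraph_def)
  finally show ?thesis .
qed

lemma cdim_inj_image:
  assumes f: "module_hom cscale cscale f" and "inj_on f S" "V.subspace S"
  shows "cdim (f ` S) = cdim S"
proof -
  obtain B where B: "B \<subseteq> S" "V.independent B" "S \<subseteq> V.span B" "card B = V.dim S"
    using V.basis_exists by blast
  have span_B: "V.span B = S"
    using B assms(3) by (metis V.span_subspace)
  then have inj: "inj_on f (V.span B)"
    using assms(2) by simp
  have "card (f ` B) = V.dim (f ` S)"
    using module_hom.independent_injective_image[OF f B(2) inj] module_hom.span_image[OF f, of B]
      B(1) span_B by (intro V.basis_card_eq_dim) auto
  moreover have "card (f ` B) = card B"
    using inj V.span_superset by (intro card_image) (blast intro: inj_on_subset)
  ultimately show ?thesis
    using B(4) by (simp add: cdim_def)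
qed

lemma is_subspace_image:
  assumes "module_hom cscale cscale f" "f ` CO m N \<subseteq> CO m N" "is_subspace m N R"
  shows "is_subspace m N (f ` R)"
proof -
  have "f ` R \<subseteq> CO m N"
    using assms(2,3) by (auto simp: is_subspace_def)
  moreover have "V.subspace (f ` R)"
    using assms(3) by (intro module_hom.subspace_image[OF assms(1)]) (simp add: is_subspace_def)
  ultimately show ?thesis
    by (simp add: is_subspace_def)
qed

lemma defined_over_Qbar_image:
  assumes f: "module_hom cscale cscale f" and "inj_on f R" "defined_over_Qbar R"
    and alg: "\<And>v x. (\<And>y. algebraic (v y)) \<Longrightarrow> algebraic (f v x)"
  shows "defined_over_Qbar (f ` R)"
proof -
  obtain B where B: "B \<subseteq> R" "V.independent B" "V.span B = R" "\<forall>b\<in>B. \<forall>x. algebraic (b x)"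
    using assms(3) by (auto simp: defined_over_Qbar_def)
  show ?thesis
    unfolding defined_over_Qbar_def
  proof (intro exI conjI)
    show "f ` B \<subseteq> f ` R" using B(1) by auto
    show "V.independent (f ` B)"
      using module_hom.independent_injective_image[OF f B(2)] assms(2) B(3) by simp
    show "V.span (f ` B) = f ` R"
      using module_hom.span_image[OF f, of B] B(3) by simp
    show "\<forall>b\<in>f ` B. \<forall>x. algebraic (b x)"
    proof (intro ballI allI)
      fix b x assume "b \<in> f ` B"
      then obtain b' where "b' \<in> B" "b = f b'" by blast
      then show "algebraic (b x)" using B(4) alg[of b' x] by simp
    qed
  qed
qed

lemma propP_image:
  assumes f: "module_hom cscale cscale f" and bij: "bij_betw f (CO m N) (CO m N)"
    and R: "is_subspace m N R"
    and F: "\<And>v. v \<in> CO m N \<Longrightarrow> f v \<in> Fsp m N \<zeta> \<longleftrightarrow> v \<in> Fsp m N \<zeta>'"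
  shows "propP m N \<zeta> (f ` R) \<longleftrightarrow> propP m N \<zeta>' R"
proof -
  have RCO: "R \<subseteq> CO m N" and subR: "V.subspace R"
    using R by (auto simp: is_subspace_def)
  have inj: "inj_on f (CO m N)" and onto: "f ` CO m N = CO m N"
    using bij by (auto simp: bij_betw_def)
  have "cdim (f ` R) = cdim R"
    using inj RCO subR by (intro cdim_inj_image[OF f]) (auto intro: inj_on_subset)
  moreover have "Fsp m N \<zeta> \<inter> f ` R = f ` (Fsp m N \<zeta>' \<inter> R)"
    using F RCO by auto
  moreover have "cdim (f ` (Fsp m N \<zeta>' \<inter> R)) = cdim (Fsp m N \<zeta>' \<inter> R)"
    using inj RCO subR
    by (intro cdim_inj_image[OF f] V.subspace_inter) (auto simp: Fsp_def intro: inj_on_subset)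
  moreover have "f ` R = {0} \<longleftrightarrow> R = {0}"
    using inj_on_image_eq_iff[OF inj RCO, of "{0}"] module_hom.zero[OF f] V.subspace_0[OF subspace_CO]
    by simp
  moreover have "f ` R = CO m N \<longleftrightarrow> R = CO m N"
    using inj_on_image_eq_iff[OF inj RCO, of "CO m N"] onto by simp
  ultimately show ?thesis
    by (simp add: propP_def)
qed

theorem lemma5:
  fixes m N :: nat and \<xi> \<xi>' :: "nat \<Rightarrow> complex" and A :: "nat \<Rightarrow> nat \<Rightarrow> complex" and \<rho> :: nat
  assumes "m \<ge> 1" and "N \<ge> 1"
    and indep: "\<forall>c0 c. algebraic c0 \<and> (\<forall>j<m. algebraic (c j)) \<and> c0 + (\<Sum>j<m. c j * \<xi> j) = 0
                 \<longrightarrow> c0 = 0 \<and> (\<forall>j<m. c j = 0)"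
    and A_alg: "\<forall>i<m. \<forall>j<m. algebraic (A i j)"
    and A_inv: "\<exists>B. (\<forall>i<m. \<forall>j<m. algebraic (B i j)) \<and>
                 (\<forall>i<m. \<forall>j<m. (\<Sum>k<m. A i k * B k j) = (if i = j then 1 else 0)) \<and>
                 (\<forall>i<m. \<forall>j<m. (\<Sum>k<m. B i k * A k j) = (if i = j then 1 else 0))"
    and \<xi>'_def: "\<forall>i<m. \<xi>' i = (\<Sum>j<m. A i j * \<xi> j)"
    and hyp: "\<forall>R. is_subspace m N R \<and> defined_over_Qbar R \<and> cdim R = \<rho> \<longrightarrow> propP m N \<xi> R"
  shows "\<forall>R'. is_subspace m N R' \<and> defined_over_Qbar R' \<and> cdim R' = \<rho> \<longrightarrow> propP m N \<xi>' R'"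
proof (intro allI impI)
  fix R' assume R': "is_subspace m N R' \<and> defined_over_Qbar R' \<and> cdim R' = \<rho>"
  obtain B where AB: "\<forall>i<m. \<forall>j<m. (\<Sum>k<m. A i k * B k j) = (if i = j then 1 else 0)"
    and BA: "\<forall>i<m. \<forall>j<m. (\<Sum>k<m. B i k * A k j) = (if i = j then 1 else 0)"
    using A_inv by blast
  let ?f = "sym_map m N A"
  have hom: "module_hom cscale cscale ?f"
    by (rule module_hom_sym_map)
  have bij: "bij_betw ?f (CO m N) (CO m N)"
    by (rule bij_betw_sym_map[OF AB[rule_format] BA[rule_format]])
  have F: "?f v \<in> Fsp m N \<xi> \<longleftrightarrow> v \<in> Fsp m N \<xi>'" if "v \<in> CO m N" for v
    using sym_map_in_Fgraph_iff[OF \<open>N \<ge> 1\<close> \<xi>'_def[rule_format] AB[rule_format] that]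
    by (simp add: Fsp_eq_Fgraph[OF \<open>N \<ge> 1\<close>])
  have inj_R': "inj_on ?f R'"
    using R' bij_betw_imp_inj_on[OF bij] by (auto simp: is_subspace_def intro: inj_on_subset)
  have "is_subspace m N (?f ` R')"
    using R' sym_map_in_CO by (intro is_subspace_image[OF hom]) auto
  moreover have "defined_over_Qbar (?f ` R')"
    using R' A_alg by (intro defined_over_Qbar_image[OF hom inj_R'] algebraic_sym_map) auto
  moreover have "cdim (?f ` R') = \<rho>"
    using R' by (simp add: cdim_inj_image[OF hom inj_R'] is_subspace_def)
  ultimately have "propP m N \<xi> (?f ` R')"
    using hyp by blast
  then show "propP m N \<xi>' R'"
    using propP_image[OF hom bij _ F] R' by blast
qed

end
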